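(* Let $f^+:[0,1]\to[0,1]$ be monotonically non-decreasing and piecewise convex, $f^-:[0,1]\to[0,1]$ monotonically non-decreasing and piecewise concave, and $f^\circ:[0,1]\to[0,1]$ monotonically non-decreasing. Let $A^+$ be the set of endpoints of the convex pieces of $f^+$ and $A^-$ the set of endpoints of the concave pieces of $f^-$ (so $\{0,1\}\subseteq A^+$ and $\{0,1\}\subseteq A^-$). Fix $\alpha>0$ and a sign pattern $(s_{uv},s_{vw},s_{uw})\in\{+,-,\varnothing\}^3$. If $\alpha LP(uvw)-ALG(uvw)<0$ for some edge lengths $(x^*_{uv},x^*_{vw},x^*_{uw})\in[0,1]^3$ satisfying the triangle inequalities, then there exist edge lengths $(x_{uv},x_{vw},x_{uw})\in[0,1]^3$ satisfying the triangle inequalities with $\alpha LP(uvw)-ALG(uvw)<0$ such that either (1) one of the triangle inequalities holds with equality, or (2) the lengths of all positive edges lie in $A^+$, the lengths of all negative edges lie in $A^-$, and the lengths of all neutral edges lie in $\{0,1\}$.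
   Context: A triangle $uvw$ has three pairs $uv,vw,uw$, each with a sign $s_e\in\{+,-,\varnothing\}$ (positive edge, negative edge, or neutral/no edge) and a length $x_e\in[0,1]$; the triangle inequalities are $x_{uv}\le x_{vw}+x_{uw}$, $x_{vw}\le x_{uv}+x_{uw}$, $x_{uw}\le x_{uv}+x_{vw}$. Let $p_e=f^{s_e}(x_e)$, where $f^{\varnothing}=f^\circ$. For a pair $(u,v)$ with third vertex $w$: $e.cost_w(u,v)=p_{uw}(1-p_{vw})+(1-p_{uw})p_{vw}$ if $s_{uv}=+$, $(1-p_{uw})(1-p_{vw})$ if $s_{uv}=-$, $0$ if $s_{uv}=\varnothing$; $e.lp_w(u,v)=(1-p_{uw}p_{vw})x_{uv}$ if $s_{uv}=+$, $(1-p_{uw}p_{vw})(1-x_{uv})$ if $s_{uv}=-$, $0$ if $s_{uv}=\varnothing$. Then $ALG(uvw)=e.cost_w(u,v)+e.cost_v(w,u)+e.cost_u(v,w)$ and $LP(uvw)=e.lp_w(u,v)+e.lp_v(w,u)+e.lp_u(v,w)$. *)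

theory Defs
  imports "HOL-Analysis.Analysis"
begin

datatype esign = Pos | Neg | Neu

definition piecewise_convex_with :: "(real \<Rightarrow> real) \<Rightarrow> real set \<Rightarrow> bool" where
  "piecewise_convex_with f A \<longleftrightarrow> finite A \<and> {0,1} \<subseteq> A \<and> A \<subseteq> {0..1} \<and>
     (\<forall>a\<in>A. \<forall>b\<in>A. a < b \<and> A \<inter> {a<..<b} = {} \<longrightarrow> convex_on {a..b} f)"

definition piecewise_concave_with :: "(real \<Rightarrow> real) \<Rightarrow> real set \<Rightarrow> bool" where
  "piecewise_concave_with f A \<longleftrightarrow> finite A \<and> {0,1} \<subseteq> A \<and> A \<subseteq> {0..1} \<and>
     (\<forall>a\<in>A. \<forall>b\<in>A. a < b \<and> A \<inter> {a<..<b} = {} \<longrightarrow> concave_on {a..b} f)"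

definition pval :: "(real \<Rightarrow> real) \<Rightarrow> (real \<Rightarrow> real) \<Rightarrow> (real \<Rightarrow> real) \<Rightarrow> esign \<Rightarrow> real \<Rightarrow> real" where
  "pval fp fm fo s x = (case s of Pos \<Rightarrow> fp x | Neg \<Rightarrow> fm x | Neu \<Rightarrow> fo x)"

text \<open>e.cost and e.lp of a pair with sign s and length x, whose two other edges
  (to the third vertex) have probabilities p1, p2.\<close>
definition ecost :: "esign \<Rightarrow> real \<Rightarrow> real \<Rightarrow> real" where
  "ecost s p1 p2 = (case s of Pos \<Rightarrow> p1 * (1 - p2) + (1 - p1) * p2
                             | Neg \<Rightarrow> (1 - p1) * (1 - p2) | Neu \<Rightarrow> 0)"

definition elp :: "esign \<Rightarrow> real \<Rightarrow> real \<Rightarrow> real \<Rightarrow> real" where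
  "elp s x p1 p2 = (case s of Pos \<Rightarrow> (1 - p1 * p2) * x
                            | Neg \<Rightarrow> (1 - p1 * p2) * (1 - x) | Neu \<Rightarrow> 0)"

definition ALG :: "(real \<Rightarrow> real) \<Rightarrow> (real \<Rightarrow> real) \<Rightarrow> (real \<Rightarrow> real) \<Rightarrow>
    esign \<Rightarrow> esign \<Rightarrow> esign \<Rightarrow> real \<Rightarrow> real \<Rightarrow> real \<Rightarrow> real" where
  "ALG fp fm fo suv svw suw xuv xvw xuw =
     (let puv = pval fp fm fo suv xuv; pvw = pval fp fm fo svw xvw; puw = pval fp fm fo suw xuw
      in ecost suv puw pvw + ecost suw pvw puv + ecost svw puv puw)"

definition LP :: "(real \<Rightarrow> real) \<Rightarrow> (real \<Rightarrow> real) \<Rightarrow> (real \<Rightarrow> real) \<Rightarrow>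
    esign \<Rightarrow> esign \<Rightarrow> esign \<Rightarrow> real \<Rightarrow> real \<Rightarrow> real \<Rightarrow> real" where
  "LP fp fm fo suv svw suw xuv xvw xuw =
     (let puv = pval fp fm fo suv xuv; pvw = pval fp fm fo svw xvw; puw = pval fp fm fo suw xuw
      in elp suv xuv puw pvw + elp suw xuw pvw puv + elp svw xvw puv puw)"

definition triangle_ok :: "real \<Rightarrow> real \<Rightarrow> real \<Rightarrow> bool" where
  "triangle_ok xuv xvw xuw \<longleftrightarrow> xuv \<in> {0..1} \<and> xvw \<in> {0..1} \<and> xuw \<in> {0..1} \<and>
     xuv \<le> xvw + xuw \<and> xvw \<le> xuv + xuw \<and> xuw \<le> xuv + xvw"

definition length_ok :: "real set \<Rightarrow> real set \<Rightarrow> esign \<Rightarrow> real \<Rightarrow> bool" where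
  "length_ok Ap Am s x = (case s of Pos \<Rightarrow> x \<in> Ap | Neg \<Rightarrow> x \<in> Am | Neu \<Rightarrow> x \<in> {0,1})"

end

theory Submission
  imports Defs
begin

text \<open>With two of the three lengths fixed, \<open>\<alpha> LP - ALG\<close> is an affine function of the
  third length \<open>t\<close> and of its probability \<open>f\<^sup>s(t)\<close>, say \<open>A t + C f\<^sup>s(t) + K\<close>, where
  the LP coefficient \<open>A\<close> is \<open>\<ge> 0\<close> for a positive, \<open>\<le> 0\<close> for a negative and \<open>0\<close> for a
  neutral edge. On each convex piece of \<open>f\<^sup>+\<close> this is either monotone (if \<open>C \<ge> 0\<close>) or
  concave (if \<open>C \<le> 0\<close>), and symmetrically for \<open>f\<^sup>-\<close>, so it does not increase when \<open>t\<close>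
  is moved to an end of its piece or to an end of the interval
  \<open>[|x\<^sub>2 - x\<^sub>3|, min (x\<^sub>2 + x\<^sub>3) 1]\<close> allowed by the triangle inequalities. The former
  makes \<open>t\<close> a breakpoint, the latter makes a triangle inequality tight (or \<open>t = 1\<close>,
  again a breakpoint). Doing this for the three edges in turn proves the claim.\<close>

lemma finite_set_encloses:
  fixes S :: "real set"
  assumes "finite S" "{0,1} \<subseteq> S" "x \<in> {0..1}" "x \<notin> S"
  obtains a b where "a \<in> S" "b \<in> S" "a < x" "x < b" "S \<inter> {a<..<b} = {}"
proof -
  let ?L = "{t\<in>S. t \<le> x}" and ?R = "{t\<in>S. x \<le> t}"
  have L: "finite ?L" "?L \<noteq> {}" and R: "finite ?R" "?R \<noteq> {}"
    using assms by auto
  define a where "a = Max ?L"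
  define b where "b = Min ?R"
  have a: "a \<in> S" "a \<le> x" using Max_in[OF L] by (auto simp: a_def)
  have b: "b \<in> S" "x \<le> b" using Min_in[OF R] by (auto simp: b_def)
  have "t \<notin> {a<..<b}" if "t \<in> S" for t
    using that L R by (cases "t \<le> x") (auto simp: a_def b_def)
  moreover have "a < x" "x < b"
    using a b \<open>x \<notin> S\<close> by (auto simp: order.order_iff_strict)
  ultimately show ?thesis
    using that a b by blast
qed

lemma minimum_at_breakpoint:
  fixes g :: "real \<Rightarrow> real"
  assumes "finite S" "{0,1} \<subseteq> S" "x \<in> {0..1}" "lo \<le> x" "x \<le> hi"
    and pieces: "\<And>a b. a \<in> S \<Longrightarrow> b \<in> S \<Longrightarrow> a < b \<Longrightarrow> S \<inter> {a<..<b} = {} \<Longrightarrow>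
      mono_on {a..b} g \<or> antimono_on {a..b} g \<or> concave_on {a..b} g"
  shows "\<exists>y. lo \<le> y \<and> y \<le> hi \<and> g y \<le> g x \<and> (y = lo \<or> y = hi \<or> y \<in> S)"
proof (cases "x \<in> S")
  case True
  then show ?thesis using assms by blast
next
  case False
  then obtain a b where ab: "a \<in> S" "b \<in> S" "a < x" "x < b" "S \<inter> {a<..<b} = {}"
    using finite_set_encloses assms by blast
  define l where "l = max lo a"
  define r where "r = min hi b"
  have lr: "l \<le> x" "x \<le> r" "{l..r} \<subseteq> {a..b}"
    using ab assms by (auto simp: l_def r_def)
  have l_ok: "lo \<le> l \<and> l \<le> hi \<and> (l = lo \<or> l = hi \<or> l \<in> S)"
    using ab assms by (auto simp: l_def max_def)
  have r_ok: "lo \<le> r \<and> r \<le> hi \<and> (r = lo \<or> r = hi \<or> r \<in> S)"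
    using ab assms by (auto simp: r_def min_def)
  have "a < b" using ab by linarith
  then consider "mono_on {a..b} g" | "antimono_on {a..b} g" | "concave_on {a..b} g"
    using pieces ab(1,2,5) by blast
  then show ?thesis
  proof cases
    case 1
    have "g l \<le> g x"
      using lr by (intro mono_onD[OF 1]) auto
    then show ?thesis using l_ok by blast
  next
    case 2
    have "g r \<le> g x"
      using lr monotone_onD[OF 2, of x r] by auto
    then show ?thesis using r_ok by blast
  next
    case 3
    then have "concave_on {l..r} g"
      using lr by (auto intro: convex_on_subset simp: concave_on_def)
    then have "min (g l) (g r) \<le> g x"
      using lr by (intro concave_on_ge_min) auto
    then show ?thesis using l_ok r_ok by (metis min_def)
  qed
qed

lemma concave_on_linear_plus_convex:
  fixes f :: "real \<Rightarrow> real"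
  assumes "convex S" "convex_on S f" "C \<le> 0"
  shows "concave_on S (\<lambda>t. A * t + C * f t)"
proof -
  have "convex_on S (\<lambda>t. - A * t)"
    using \<open>convex S\<close> by (simp add: convex_on_def algebra_simps)
  moreover have "convex_on S (\<lambda>t. - C * f t)"
    using assms by (intro convex_on_cmul) auto
  ultimately have "convex_on S (\<lambda>t. - A * t + - C * f t)"
    by (rule convex_on_add)
  then show ?thesis
    unfolding concave_on_def by (simp add: algebra_simps)
qed

lemma concave_on_linear_plus_concave:
  fixes f :: "real \<Rightarrow> real"
  assumes "convex S" "concave_on S f" "0 \<le> C"
  shows "concave_on S (\<lambda>t. A * t + C * f t)"
  using concave_on_linear_plus_convex[of S "\<lambda>t. - f t" "- C" A] assms
  by (simp add: concave_on_def)

lemma mono_on_linear_plus_scaled: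
  fixes f :: "real \<Rightarrow> real"
  assumes "mono_on S f" "0 \<le> A" "0 \<le> C"
  shows "mono_on S (\<lambda>t. A * t + C * f t)"
  using assms by (auto intro!: mono_onI add_mono mult_left_mono dest: mono_onD)

lemma antimono_on_linear_plus_scaled:
  fixes f :: "real \<Rightarrow> real"
  assumes "mono_on S f" "A \<le> 0" "C \<le> 0"
  shows "antimono_on S (\<lambda>t. A * t + C * f t)"
  using assms by (auto intro!: monotone_onI add_mono mult_left_mono_neg dest: mono_onD)

definition slope_matches_sign :: "esign \<Rightarrow> real \<Rightarrow> bool" where
  "slope_matches_sign s A \<longleftrightarrow> (case s of Pos \<Rightarrow> 0 \<le> A | Neg \<Rightarrow> A \<le> 0 | Neu \<Rightarrow> A = 0)"

definition degenerate_triangle :: "real \<Rightarrow> real \<Rightarrow> real \<Rightarrow> bool" where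
  "degenerate_triangle x y z \<longleftrightarrow> x = y + z \<or> y = x + z \<or> z = x + y"

lemma triangle_ok_iff_first_in_interval:
  "triangle_ok x y z \<longleftrightarrow> y \<in> {0..1} \<and> z \<in> {0..1} \<and> x \<in> {\<bar>y - z\<bar>..min (y + z) 1}"
  by (auto simp: triangle_ok_def)

lemma LP_swap: "LP fp fm fo s2 s1 s3 x2 x1 x3 = LP fp fm fo s1 s2 s3 x1 x2 x3"
  by (cases s1; cases s2; cases s3) (simp_all add: LP_def Let_def elp_def algebra_simps)

lemma ALG_swap: "ALG fp fm fo s2 s1 s3 x2 x1 x3 = ALG fp fm fo s1 s2 s3 x1 x2 x3"
  by (cases s1; cases s2; cases s3) (simp_all add: ALG_def Let_def ecost_def algebra_simps)

lemma LP_rotate: "LP fp fm fo s3 s1 s2 x3 x1 x2 = LP fp fm fo s1 s2 s3 x1 x2 x3"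
  by (cases s1; cases s2; cases s3) (simp_all add: LP_def Let_def elp_def algebra_simps)

lemma ALG_rotate: "ALG fp fm fo s3 s1 s2 x3 x1 x2 = ALG fp fm fo s1 s2 s3 x1 x2 x3"
  by (cases s1; cases s2; cases s3) (simp_all add: ALG_def Let_def ecost_def algebra_simps)

locale triangle_rounding =
  fixes fp fm fo :: "real \<Rightarrow> real" and Ap Am :: "real set" and \<alpha> :: real
  assumes fp_range: "fp ` {0..1} \<subseteq> {0..1}" and fp_mono: "mono_on {0..1} fp"
    and fp_pieces: "piecewise_convex_with fp Ap"
    and fm_range: "fm ` {0..1} \<subseteq> {0..1}" and fm_mono: "mono_on {0..1} fm"
    and fm_pieces: "piecewise_concave_with fm Am"
    and fo_range: "fo ` {0..1} \<subseteq> {0..1}" and fo_mono: "mono_on {0..1} fo"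
    and alpha_pos: "\<alpha> > 0"
begin

definition gap :: "esign \<Rightarrow> esign \<Rightarrow> esign \<Rightarrow> real \<Rightarrow> real \<Rightarrow> real \<Rightarrow> real" where
  "gap s1 s2 s3 x1 x2 x3 = \<alpha> * LP fp fm fo s1 s2 s3 x1 x2 x3 - ALG fp fm fo s1 s2 s3 x1 x2 x3"

definition breakpoints :: "esign \<Rightarrow> real set" where
  "breakpoints s = (case s of Pos \<Rightarrow> Ap | Neg \<Rightarrow> Am | Neu \<Rightarrow> {0,1})"

lemma length_ok_iff_breakpoint: "length_ok Ap Am s x \<longleftrightarrow> x \<in> breakpoints s"
  by (cases s) (simp_all add: length_ok_def breakpoints_def)

lemma breakpoints_valid: "finite (breakpoints s)" "{0,1} \<subseteq> breakpoints s" "breakpoints s \<subseteq> {0..1}"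
  using fp_pieces fm_pieces
  by (cases s; auto simp: breakpoints_def piecewise_convex_with_def piecewise_concave_with_def)+

lemma pval_range: "x \<in> {0..1} \<Longrightarrow> pval fp fm fo s x \<in> {0..1}"
  using fp_range fm_range fo_range by (cases s) (auto simp: pval_def image_subset_iff)

lemma gap_affine_in_first:
  assumes "x2 \<in> {0..1}" "x3 \<in> {0..1}"
  obtains A C K where "slope_matches_sign s1 A"
    "\<And>t. gap s1 s2 s3 t x2 x3 = A * t + C * pval fp fm fo s1 t + K"
proof -
  define p2 where "p2 = pval fp fm fo s2 x2"
  define p3 where "p3 = pval fp fm fo s3 x3"
  \<comment> \<open>\<open>H p\<close> is the gap at \<open>t = 0\<close> with the moved edge's probability replaced by \<open>p\<close>;
    it is affine in \<open>p\<close>, since every \<open>ecost\<close> and \<open>elp\<close> term is.\<close>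
  define H where "H p = \<alpha> * (elp s1 0 p3 p2 + elp s3 x3 p2 p + elp s2 x2 p p3)
    - (ecost s1 p3 p2 + ecost s3 p2 p + ecost s2 p p3)" for p
  define A where "A = \<alpha> * (elp s1 1 p3 p2 - elp s1 0 p3 p2)"
  have "p3 * p2 \<le> 1"
    using pval_range[OF assms(1)] pval_range[OF assms(2)] by (auto simp: p2_def p3_def mult_le_one)
  then have "slope_matches_sign s1 A"
    using alpha_pos
    by (cases s1) (auto simp: slope_matches_sign_def A_def elp_def intro: mult_nonneg_nonpos)
  moreover have "gap s1 s2 s3 t x2 x3 = A * t + (H 1 - H 0) * pval fp fm fo s1 t + H 0" for t
    unfolding gap_def A_def H_def p2_def p3_def
    by (cases s1; cases s2; cases s3) (simp_all add: LP_def ALG_def Let_def elp_def ecost_def algebra_simps)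
  ultimately show ?thesis using that by blast
qed

lemma linear_plus_pval_on_piece:
  assumes "slope_matches_sign s A" "a \<in> breakpoints s" "b \<in> breakpoints s" "a < b"
    "breakpoints s \<inter> {a<..<b} = {}"
  shows "mono_on {a..b} (\<lambda>t. A * t + C * pval fp fm fo s t) \<or>
    antimono_on {a..b} (\<lambda>t. A * t + C * pval fp fm fo s t) \<or>
    concave_on {a..b} (\<lambda>t. A * t + C * pval fp fm fo s t)"
proof -
  have "a \<in> {0..1}" "b \<in> {0..1}"
    using assms(2,3) breakpoints_valid(3) by blast+
  then have sub: "{a..b} \<subseteq> {0..1}"
    by auto
  show ?thesis
  proof (cases s)
    case Pos
    have "convex_on {a..b} fp"
      using assms fp_pieces Pos by (auto simp: breakpoints_def piecewise_convex_with_def)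
    then show ?thesis
      using Pos assms(1) mono_on_subset[OF fp_mono sub]
      by (cases "0 \<le> C") (auto simp: pval_def slope_matches_sign_def
          intro: mono_on_linear_plus_scaled concave_on_linear_plus_convex)
  next
    case Neg
    have "concave_on {a..b} fm"
      using assms fm_pieces Neg by (auto simp: breakpoints_def piecewise_concave_with_def)
    then show ?thesis
      using Neg assms(1) mono_on_subset[OF fm_mono sub]
      by (cases "C \<le> 0") (auto simp: pval_def slope_matches_sign_def
          intro: antimono_on_linear_plus_scaled concave_on_linear_plus_concave)
  next
    case Neu
    then have "A = 0"
      using assms(1) by (simp add: slope_matches_sign_def)
    then show ?thesis
      using Neu mono_on_subset[OF fo_mono sub] mono_on_linear_plus_scaled[of _ fo A C]
        antimono_on_linear_plus_scaled[of _ fo A C]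
      by (cases "0 \<le> C") (auto simp: pval_def)
  qed
qed

lemma improve_first_length:
  assumes "triangle_ok x1 x2 x3" "gap s1 s2 s3 x1 x2 x3 < 0"
  shows "\<exists>y. triangle_ok y x2 x3 \<and> gap s1 s2 s3 y x2 x3 < 0 \<and>
    (degenerate_triangle y x2 x3 \<or> length_ok Ap Am s1 y)"
proof -
  define lo where "lo = \<bar>x2 - x3\<bar>"
  define hi where "hi = min (x2 + x3) 1"
  have x: "x2 \<in> {0..1}" "x3 \<in> {0..1}" "x1 \<in> {lo..hi}" "x1 \<in> {0..1}"
    using assms(1) by (auto simp: triangle_ok_iff_first_in_interval lo_def hi_def triangle_ok_def)
  obtain A C K where A: "slope_matches_sign s1 A"
    and affine: "\<And>t. gap s1 s2 s3 t x2 x3 = A * t + C * pval fp fm fo s1 t + K"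
    using gap_affine_in_first[OF x(1,2)] by blast
  have "\<exists>y. lo \<le> y \<and> y \<le> hi \<and>
      A * y + C * pval fp fm fo s1 y \<le> A * x1 + C * pval fp fm fo s1 x1 \<and>
      (y = lo \<or> y = hi \<or> y \<in> breakpoints s1)"
    using x(3)
    by (intro minimum_at_breakpoint[OF breakpoints_valid(1,2) x(4)] linear_plus_pval_on_piece[OF A])
      auto
  then obtain y where y: "y \<in> {lo..hi}"
      "A * y + C * pval fp fm fo s1 y \<le> A * x1 + C * pval fp fm fo s1 x1"
      "y = lo \<or> y = hi \<or> y \<in> breakpoints s1"
    by auto
  have "gap s1 s2 s3 y x2 x3 < 0"
    using assms(2) y(2) affine[of y] affine[of x1] by linarith
  moreover have "triangle_ok y x2 x3"
    using x(1,2) y(1) by (simp add: triangle_ok_iff_first_in_interval lo_def hi_def)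
  moreover have "degenerate_triangle y x2 x3 \<or> y \<in> breakpoints s1"
  proof -
    have "degenerate_triangle lo x2 x3"
      by (auto simp: degenerate_triangle_def lo_def abs_if)
    moreover have "degenerate_triangle hi x2 x3 \<or> hi = 1"
      by (auto simp: degenerate_triangle_def hi_def min_def)
    ultimately show ?thesis
      using y(3) breakpoints_valid(2)[of s1] by auto
  qed
  ultimately show ?thesis
    by (auto simp: length_ok_iff_breakpoint)
qed

lemma improve_second_length:
  assumes "triangle_ok x1 x2 x3" "gap s1 s2 s3 x1 x2 x3 < 0"
  shows "\<exists>y. triangle_ok x1 y x3 \<and> gap s1 s2 s3 x1 y x3 < 0 \<and>
    (degenerate_triangle x1 y x3 \<or> length_ok Ap Am s2 y)"
  using improve_first_length[of x2 x1 x3 s2 s1 s3] assms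
  by (auto simp: gap_def LP_swap ALG_swap triangle_ok_def degenerate_triangle_def)

lemma improve_third_length:
  assumes "triangle_ok x1 x2 x3" "gap s1 s2 s3 x1 x2 x3 < 0"
  shows "\<exists>y. triangle_ok x1 x2 y \<and> gap s1 s2 s3 x1 x2 y < 0 \<and>
    (degenerate_triangle x1 x2 y \<or> length_ok Ap Am s3 y)"
  using improve_first_length[of x3 x1 x2 s3 s1 s2] assms
  by (auto simp: gap_def LP_rotate ALG_rotate triangle_ok_def degenerate_triangle_def)

lemma violation_at_extreme_lengths:
  assumes "triangle_ok x1 x2 x3" "gap s1 s2 s3 x1 x2 x3 < 0"
  shows "\<exists>y1 y2 y3. triangle_ok y1 y2 y3 \<and> gap s1 s2 s3 y1 y2 y3 < 0 \<and>
    (degenerate_triangle y1 y2 y3 \<or>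
     length_ok Ap Am s1 y1 \<and> length_ok Ap Am s2 y2 \<and> length_ok Ap Am s3 y3)"
proof -
  obtain y1 where 1: "triangle_ok y1 x2 x3" "gap s1 s2 s3 y1 x2 x3 < 0"
      "degenerate_triangle y1 x2 x3 \<or> length_ok Ap Am s1 y1"
    using improve_first_length[OF assms] by blast
  obtain y2 where 2: "triangle_ok y1 y2 x3" "gap s1 s2 s3 y1 y2 x3 < 0"
      "degenerate_triangle y1 y2 x3 \<or> length_ok Ap Am s2 y2"
    using improve_second_length[OF 1(1,2)] by blast
  obtain y3 where 3: "triangle_ok y1 y2 y3" "gap s1 s2 s3 y1 y2 y3 < 0"
      "degenerate_triangle y1 y2 y3 \<or> length_ok Ap Am s3 y3"
    using improve_third_length[OF 2(1,2)] by blast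
  show ?thesis
    using 1 2 3 by blast
qed

end

theorem lemma2:
  fixes fp fm fo :: "real \<Rightarrow> real" and Ap Am :: "real set" and \<alpha> :: real
    and suv svw suw :: esign and xuv' xvw' xuw' :: real
  assumes "fp ` {0..1} \<subseteq> {0..1}" "mono_on {0..1} fp" "piecewise_convex_with fp Ap"
    and "fm ` {0..1} \<subseteq> {0..1}" "mono_on {0..1} fm" "piecewise_concave_with fm Am"
    and "fo ` {0..1} \<subseteq> {0..1}" "mono_on {0..1} fo"
    and "\<alpha> > 0"
    and "triangle_ok xuv' xvw' xuw'"
    and "\<alpha> * LP fp fm fo suv svw suw xuv' xvw' xuw' - ALG fp fm fo suv svw suw xuv' xvw' xuw' < 0"
  shows "\<exists>xuv xvw xuw. triangle_ok xuv xvw xuw \<and>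
           \<alpha> * LP fp fm fo suv svw suw xuv xvw xuw - ALG fp fm fo suv svw suw xuv xvw xuw < 0 \<and>
           ((xuv = xvw + xuw \<or> xvw = xuv + xuw \<or> xuw = xuv + xvw) \<or>
            (length_ok Ap Am suv xuv \<and> length_ok Ap Am svw xvw \<and> length_ok Ap Am suw xuw))"
proof -
  interpret triangle_rounding fp fm fo Ap Am \<alpha>
    using assms(1-9) by unfold_locales
  have "gap suv svw suw xuv' xvw' xuw' < 0"
    using assms(11) by (simp add: gap_def)
  from violation_at_extreme_lengths[OF assms(10) this] show ?thesis
    unfolding gap_def degenerate_triangle_def .
qed

end
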